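(* Let $\varrho=\sum_{\omega\in\Omega}\varrho(\omega)|\omega\rangle\langle\omega|$ and $\sigma=\sum_{\omega\in\Omega}\sigma(\omega)|\omega\rangle\langle\omega|$ be unequal commuting density operators, diagonal in a common orthonormal basis $(|\omega\rangle)_{\omega\in\Omega}$ of a finite-dimensional Hilbert space. Assume there is a subset $\Omega_0\subseteq\Omega$, with $\Omega_1:=\Omega\setminus\Omega_0$, such that $\sigma(\Omega_0)\varrho(\omega)=\varrho(\Omega_0)\sigma(\omega)$ for $\omega\in\Omega_0$ and $\sigma(\Omega_1)\varrho(\omega)=\varrho(\Omega_1)\sigma(\omega)$ for $\omega\in\Omega_1$, and $\varrho(\Omega_k)\neq0$, $\sigma(\Omega_k)\ne0$ for $k=0,1$. Then \[ \overline{D}_\alpha^{\mathrm{test}}(\varrho\|\sigma)<\hat D_\alpha^{\mathrm{test}}(\varrho\|\sigma)=D_\alpha(\varrho\|\sigma),\qquad \alpha\in(0,1). \] In particular, this holds for any two unequal commuting qubit states with full support.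
   Context: $\varrho(\Omega_0):=\sum_{\omega\in\Omega_0}\varrho(\omega)$, etc. For probability vectors $p,q$ and $\alpha\in(0,1)$, $D_\alpha(p\|q)=\frac{1}{\alpha-1}\log\sum_\omega p(\omega)^\alpha q(\omega)^{1-\alpha}$; for commuting states $D_\alpha(\varrho\|\sigma)$ is the classical divergence of the eigenvalue vectors. A test is an operator $0\le T\le I$; $\mathcal T(X):=(\operatorname{Tr}XT,\operatorname{Tr}X(I-T))$. $D_\alpha^{\mathrm{test}}(\varrho\|\sigma):=\max_{0\le T\le I}D_\alpha(\mathcal T(\varrho)\|\mathcal T(\sigma))$, $\overline{D}_\alpha^{\mathrm{test}}(\varrho\|\sigma):=\limsup_{n\to\infty}\frac1n D_\alpha^{\mathrm{test}}(\varrho^{\otimes n}\|\sigma^{\otimes n})$, and $\hat D_\alpha^{\mathrm{test}}(\varrho\|\sigma):=\sup_{n\in\mathbb N}\frac1n D_\alpha^{\mathrm{test}}(\varrho^{\otimes n}\|\sigma^{\otimes n})$. *)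

theory Defs
  imports "HOL-Analysis.Analysis" "HOL-Library.Liminf_Limsup"
begin

text \<open>Operators on the finite-dimensional Hilbert space with orthonormal basis indexed by a
finite carrier set I are represented by their matrices  'i => 'i => complex.\<close>

definition quad_form :: "'i set \<Rightarrow> ('i \<Rightarrow> 'i \<Rightarrow> complex) \<Rightarrow> ('i \<Rightarrow> complex) \<Rightarrow> complex" where
  "quad_form I A v = (\<Sum>i\<in>I. \<Sum>j\<in>I. cnj (v i) * A i j * v j)"

text \<open>A test: an operator 0 <= T <= I (Loewner order, via the quadratic form).\<close>
definition is_test :: "'i set \<Rightarrow> ('i \<Rightarrow> 'i \<Rightarrow> complex) \<Rightarrow> bool" where
  "is_test I T \<longleftrightarrow> (\<forall>v. quad_form I T v \<in> \<real> \<and> 0 \<le> Re (quad_form I T v)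
        \<and> Re (quad_form I T v) \<le> (\<Sum>i\<in>I. (cmod (v i))\<^sup>2))"

definition trace_prod :: "'i set \<Rightarrow> ('i \<Rightarrow> 'i \<Rightarrow> complex) \<Rightarrow> ('i \<Rightarrow> 'i \<Rightarrow> complex) \<Rightarrow> complex" where
  "trace_prod I X T = (\<Sum>i\<in>I. \<Sum>j\<in>I. X i j * T j i)"

definition id_op :: "'i \<Rightarrow> 'i \<Rightarrow> complex" where
  "id_op i j = (if i = j then 1 else 0)"

definition test_meas :: "'i set \<Rightarrow> ('i \<Rightarrow> 'i \<Rightarrow> complex) \<Rightarrow> ('i \<Rightarrow> 'i \<Rightarrow> complex) \<Rightarrow> real \<times> real" where
  "test_meas I T X = (Re (trace_prod I X T), Re (trace_prod I X (\<lambda>i j. id_op i j - T i j)))"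

definition renyi :: "'w set \<Rightarrow> real \<Rightarrow> ('w \<Rightarrow> real) \<Rightarrow> ('w \<Rightarrow> real) \<Rightarrow> real" where
  "renyi W \<alpha> p q = 1 / (\<alpha> - 1) * ln (\<Sum>w\<in>W. p w powr \<alpha> * q w powr (1 - \<alpha>))"

definition renyi_pair :: "real \<Rightarrow> real \<times> real \<Rightarrow> real \<times> real \<Rightarrow> real" where
  "renyi_pair \<alpha> p q = renyi (UNIV :: bool set) \<alpha>
      (\<lambda>b. if b then fst p else snd p) (\<lambda>b. if b then fst q else snd q)"

definition D_test :: "'i set \<Rightarrow> real \<Rightarrow> ('i \<Rightarrow> 'i \<Rightarrow> complex) \<Rightarrow> ('i \<Rightarrow> 'i \<Rightarrow> complex) \<Rightarrow> real" where
  "D_test I \<alpha> X Y = (SUP T\<in>{T. is_test I T}. renyi_pair \<alpha> (test_meas I T X) (test_meas I T Y))"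

text \<open>Diagonal operator with given diagonal, and the n-fold tensor power of an operator on
the space with basis indexed by the type 'a (basis of the tensor power: lists of length n).\<close>
definition diag_op :: "('a \<Rightarrow> real) \<Rightarrow> 'a \<Rightarrow> 'a \<Rightarrow> complex" where
  "diag_op p i j = (if i = j then complex_of_real (p i) else 0)"

definition tensor_pow :: "('a \<Rightarrow> 'a \<Rightarrow> complex) \<Rightarrow> nat \<Rightarrow> 'a list \<Rightarrow> 'a list \<Rightarrow> complex" where
  "tensor_pow A n xs ys = (\<Prod>i<n. A (xs ! i) (ys ! i))"

definition words :: "nat \<Rightarrow> 'a list set" where
  "words n = {xs. length xs = n}"

definition D_test_n :: "real \<Rightarrow> ('a \<Rightarrow> real) \<Rightarrow> ('a \<Rightarrow> real) \<Rightarrow> nat \<Rightarrow> real" where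
  "D_test_n \<alpha> p q n = D_test (words n) \<alpha> (tensor_pow (diag_op p) n) (tensor_pow (diag_op q) n)"

definition prob_vec :: "('a::finite \<Rightarrow> real) \<Rightarrow> bool" where
  "prob_vec p \<longleftrightarrow> (\<forall>w. 0 \<le> p w) \<and> (\<Sum>w\<in>UNIV. p w) = 1"

end

(*
  For diagonal states a test acts only through its diagonal u, 0 <= u <= 1, and the measured
  Renyi quantity is ln (test_affinity u) / (alpha - 1).  Hoelder's inequality gives
  test_affinity u >= Z^n with Z = sum_w rho(w)^alpha sigma(w)^(1-alpha), so n D_alpha bounds the
  n-copy test divergence; for n = 1 the projection onto Omega0 attains it, since rho and sigma
  differ only through their block masses a and b.

  For the strict inequality write both product measures as a Chernoff-tilted product measure
  times exp((1-alpha) L) resp. exp(-alpha L), where the log-likelihood ratio L of a word is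
  affine, with nonzero slope, in the number k of its letters from Omega0.  Under the tilted
  measure k concentrates at n s, yet the windows of k around n (s - delta), n s and
  n (s + delta) each still carry mass exp(-O(delta^2 n)).  Each window is half-filled by one
  outcome of the test, so some outcome is heavy on two windows at distance n delta, where L
  differs by order delta n; the resulting gap in Hoelder's inequality is exp(Theta(delta n)),
  which wins for small delta.  Hence test_affinity >= Z^n exp(kappa n) eventually, and the
  limsup stays below D_alpha.
*)
theory Submission
  imports Defs
begin

section \<open>Words and product weights\<close>

definition word_weight :: "('a \<Rightarrow> real) \<Rightarrow> 'a list \<Rightarrow> real" where
  "word_weight f xs = prod_list (map f xs)"

definition hits :: "'a set \<Rightarrow> 'a list \<Rightarrow> nat" where
  "hits A xs = length (filter (\<lambda>x. x \<in> A) xs)"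

lemma word_weight_Nil [simp]: "word_weight f [] = 1"
  by (simp add: word_weight_def)

lemma word_weight_Cons [simp]: "word_weight f (x # xs) = f x * word_weight f xs"
  by (simp add: word_weight_def)

lemma word_weight_nonneg: "(\<And>x. 0 \<le> f x) \<Longrightarrow> 0 \<le> word_weight f xs"
  by (induction xs) auto

lemma word_weight_conv_nth: "word_weight f xs = (\<Prod>i<length xs. f (xs ! i))"
  by (induction xs) (simp_all add: prod.lessThan_Suc_shift del: prod.lessThan_Suc)

lemma hits_Nil [simp]: "hits A [] = 0"
  by (simp add: hits_def)

lemma hits_Cons [simp]: "hits A (x # xs) = (if x \<in> A then Suc (hits A xs) else hits A xs)"
  by (simp add: hits_def)

lemma hits_le_length: "hits A xs \<le> length xs"
  by (simp add: hits_def)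

lemma real_hits_conv_sum_list: "real (hits A xs) = (\<Sum>x\<leftarrow>xs. indicator A x)"
  by (induction xs) simp_all

lemma finite_words: "finite (words n :: 'a::finite list set)"
proof -
  have "words n = {xs. set xs \<subseteq> (UNIV :: 'a set) \<and> length xs = n}"
    by (auto simp: words_def)
  then show ?thesis
    using finite_lists_length_eq[of "UNIV :: 'a set" n] by simp
qed

lemma words_0: "words 0 = {[]}"
  by (auto simp: words_def)

lemma length_of_words: "xs \<in> words n \<Longrightarrow> length xs = n"
  by (simp add: words_def)

lemma sum_words_Suc:
  fixes f :: "'a::finite list \<Rightarrow> 'b::comm_monoid_add"
  shows "(\<Sum>xs\<in>words (Suc n). f xs) = (\<Sum>x\<in>UNIV. \<Sum>xs\<in>words n. f (x # xs))"
proof -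
  have image: "words (Suc n) = (\<lambda>(x, xs). x # xs) ` (UNIV \<times> words n)"
    by (auto simp: words_def length_Suc_conv image_iff)
  have "inj_on (\<lambda>(x, xs). x # xs) (UNIV \<times> words n)"
    by (auto simp: inj_on_def)
  then have "(\<Sum>xs\<in>words (Suc n). f xs) = (\<Sum>(x, xs)\<in>UNIV \<times> words n. f (x # xs))"
    unfolding image by (subst sum.reindex) (simp_all add: comp_def case_prod_beta')
  then show ?thesis
    by (simp add: sum.cartesian_product)
qed

lemma sum_words_word_weight: "(\<Sum>xs\<in>words n. word_weight f xs) = (\<Sum>x\<in>UNIV. f x) ^ n"
  for f :: "'a::finite \<Rightarrow> real"
proof (induction n)
  case (Suc n)
  then show ?case
    by (simp add: sum_words_Suc sum_distrib_right flip: sum_distrib_left)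
qed (simp add: words_0)

section \<open>Concentration of additive functionals of i.i.d. letters\<close>

context
  fixes \<nu> h :: "'a::finite \<Rightarrow> real" and \<mu> :: real
  assumes \<nu>_sum: "(\<Sum>x\<in>UNIV. \<nu> x) = 1" and \<mu>_def: "\<mu> = (\<Sum>x\<in>UNIV. \<nu> x * h x)"
begin

lemma sum_words_centered:
  "(\<Sum>xs\<in>words n. word_weight \<nu> xs * ((\<Sum>x\<leftarrow>xs. h x) - real (length xs) * \<mu>)) = 0"
proof (induction n)
  case (Suc n)
  have "(\<Sum>x\<in>UNIV. \<nu> x * (h x - \<mu>)) = 0"
    using \<nu>_sum by (simp add: \<mu>_def algebra_simps sum_subtractf flip: sum_distrib_right)
  moreover have "word_weight \<nu> (x # xs) * ((\<Sum>x\<leftarrow>x # xs. h x) - real (length (x # xs)) * \<mu>)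
      = \<nu> x * (h x - \<mu>) * word_weight \<nu> xs
        + \<nu> x * (word_weight \<nu> xs * ((\<Sum>x\<leftarrow>xs. h x) - real (length xs) * \<mu>))" for x xs
    by (simp add: algebra_simps)
  ultimately show ?case
    using Suc \<nu>_sum
    by (simp add: sum_words_Suc sum.distrib sum_words_word_weight flip: sum_distrib_left sum_distrib_right)
qed (simp add: words_0)

lemma sum_words_centered_square:
  "(\<Sum>xs\<in>words n. word_weight \<nu> xs * ((\<Sum>x\<leftarrow>xs. h x) - real (length xs) * \<mu>)\<^sup>2)
     = real n * (\<Sum>x\<in>UNIV. \<nu> x * (h x - \<mu>)\<^sup>2)"
proof (induction n)
  case (Suc n)
  have expand: "word_weight \<nu> (x # xs) * ((\<Sum>x\<leftarrow>x # xs. h x) - real (length (x # xs)) * \<mu>)\<^sup>2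
      = \<nu> x * (h x - \<mu>)\<^sup>2 * word_weight \<nu> xs
        + 2 * (\<nu> x * (h x - \<mu>)) * (word_weight \<nu> xs * ((\<Sum>x\<leftarrow>xs. h x) - real (length xs) * \<mu>))
        + \<nu> x * (word_weight \<nu> xs * ((\<Sum>x\<leftarrow>xs. h x) - real (length xs) * \<mu>)\<^sup>2)" for x xs
    by (simp add: power2_eq_square algebra_simps)
  have "(\<Sum>xs\<in>words (Suc n). word_weight \<nu> xs * ((\<Sum>x\<leftarrow>xs. h x) - real (length xs) * \<mu>)\<^sup>2)
      = (\<Sum>x\<in>UNIV. \<nu> x * (h x - \<mu>)\<^sup>2 * (\<Sum>xs\<in>words n. word_weight \<nu> xs))
        + (\<Sum>x\<in>UNIV. 2 * (\<nu> x * (h x - \<mu>))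
            * (\<Sum>xs\<in>words n. word_weight \<nu> xs * ((\<Sum>x\<leftarrow>xs. h x) - real (length xs) * \<mu>)))
        + (\<Sum>x\<in>UNIV. \<nu> x
            * (\<Sum>xs\<in>words n. word_weight \<nu> xs * ((\<Sum>x\<leftarrow>xs. h x) - real (length xs) * \<mu>)\<^sup>2))"
    unfolding sum_words_Suc expand by (simp add: sum.distrib flip: sum_distrib_left)
  then show ?case
    using Suc \<nu>_sum
    by (simp add: sum_words_word_weight sum_words_centered distrib_right flip: sum_distrib_right)
qed (simp add: words_0)

lemma chebyshev_tail_words:
  assumes \<nu>_nonneg: "\<And>x. 0 \<le> \<nu> x" and "0 < \<eta>" and "0 < n"
  shows "(\<Sum>xs\<in>{xs\<in>words n. \<eta> * real n < \<bar>(\<Sum>x\<leftarrow>xs. h x) - real n * \<mu>\<bar>}. word_weight \<nu> xs)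
    \<le> (\<Sum>x\<in>UNIV. \<nu> x * (h x - \<mu>)\<^sup>2) / (\<eta>\<^sup>2 * real n)"
proof -
  define dev where "dev xs = (\<Sum>x\<leftarrow>xs. h x) - real n * \<mu>" for xs
  have ww_nonneg: "0 \<le> word_weight \<nu> xs" for xs
    using \<nu>_nonneg by (rule word_weight_nonneg)
  have scale: "0 < \<eta> * real n"
    using assms by simp
  have "(\<Sum>xs\<in>{xs\<in>words n. \<eta> * real n < \<bar>dev xs\<bar>}. word_weight \<nu> xs)
      \<le> (\<Sum>xs\<in>{xs\<in>words n. \<eta> * real n < \<bar>dev xs\<bar>}. word_weight \<nu> xs * (dev xs)\<^sup>2 / (\<eta> * real n)\<^sup>2)"
  proof (rule sum_mono)
    fix xs assume "xs \<in> {xs\<in>words n. \<eta> * real n < \<bar>dev xs\<bar>}"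
    then have "\<bar>\<eta> * real n\<bar> \<le> \<bar>dev xs\<bar>"
      using scale by auto
    then have "(\<eta> * real n)\<^sup>2 \<le> (dev xs)\<^sup>2"
      by (simp add: abs_le_square_iff)
    then have "1 \<le> (dev xs)\<^sup>2 / (\<eta> * real n)\<^sup>2"
      using assms(2,3) by (simp add: le_divide_eq)
    then show "word_weight \<nu> xs \<le> word_weight \<nu> xs * (dev xs)\<^sup>2 / (\<eta> * real n)\<^sup>2"
      using mult_left_mono[OF _ ww_nonneg[of xs]] by fastforce
  qed
  also have "\<dots> \<le> (\<Sum>xs\<in>words n. word_weight \<nu> xs * (dev xs)\<^sup>2 / (\<eta> * real n)\<^sup>2)"
    by (rule sum_mono2) (auto simp: finite_words ww_nonneg)
  also have "\<dots> = (\<Sum>xs\<in>words n. word_weight \<nu> xs * ((\<Sum>x\<leftarrow>xs. h x) - real (length xs) * \<mu>)\<^sup>2)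
      / (\<eta> * real n)\<^sup>2"
    unfolding sum_divide_distrib by (intro sum.cong) (simp_all add: dev_def length_of_words)
  also have "\<dots> = (\<Sum>x\<in>UNIV. \<nu> x * (h x - \<mu>)\<^sup>2) / (\<eta>\<^sup>2 * real n)"
    using assms(3) by (simp add: sum_words_centered_square power_mult_distrib power2_eq_square[of "real n"])
  finally show ?thesis
    by (simp add: dev_def)
qed

lemma chebyshev_words:
  assumes "\<And>x. 0 \<le> \<nu> x" and "0 < \<eta>" and "0 < n"
  shows "1 - (\<Sum>x\<in>UNIV. \<nu> x * (h x - \<mu>)\<^sup>2) / (\<eta>\<^sup>2 * real n)
    \<le> (\<Sum>xs\<in>{xs\<in>words n. \<bar>(\<Sum>x\<leftarrow>xs. h x) - real n * \<mu>\<bar> \<le> \<eta> * real n}. word_weight \<nu> xs)"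
proof -
  let ?tail = "{xs\<in>words n. \<eta> * real n < \<bar>(\<Sum>x\<leftarrow>xs. h x) - real n * \<mu>\<bar>}"
  have "words n - ?tail = {xs\<in>words n. \<bar>(\<Sum>x\<leftarrow>xs. h x) - real n * \<mu>\<bar> \<le> \<eta> * real n}"
    by auto
  moreover have "(\<Sum>xs\<in>words n. word_weight \<nu> xs)
      = (\<Sum>xs\<in>words n - ?tail. word_weight \<nu> xs) + (\<Sum>xs\<in>?tail. word_weight \<nu> xs)"
    by (rule sum.subset_diff) (auto simp: finite_words)
  moreover have "(\<Sum>xs\<in>words n. word_weight \<nu> xs) = 1"
    using \<nu>_sum by (simp add: sum_words_word_weight)
  ultimately show ?thesis
    using chebyshev_tail_words[OF assms] by simp
qed

end

section \<open>Distributions proportional on two blocks\<close>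

definition binary_kl :: "real \<Rightarrow> real \<Rightarrow> real" where
  "binary_kl t s = t * ln (t / s) + (1 - t) * ln ((1 - t) / (1 - s))"

lemma binary_kl_le_chi_square:
  assumes "0 < s" "s < 1" "0 < t" "t < 1"
  shows "binary_kl t s \<le> (t - s)\<^sup>2 / (s * (1 - s))"
proof -
  have "t * ln (t / s) \<le> t * (t / s - 1)"
    using assms by (intro mult_left_mono ln_le_minus_one) auto
  moreover have "(1 - t) * ln ((1 - t) / (1 - s)) \<le> (1 - t) * ((1 - t) / (1 - s) - 1)"
    using assms by (intro mult_left_mono ln_le_minus_one) auto
  moreover have "t * (t / s - 1) + (1 - t) * ((1 - t) / (1 - s) - 1) = (t - s)\<^sup>2 / (s * (1 - s))"
    using assms by (simp add: field_simps power2_eq_square)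
  ultimately show ?thesis
    unfolding binary_kl_def by linarith
qed

definition split_dist :: "('a \<Rightarrow> real) \<Rightarrow> 'a set \<Rightarrow> real \<Rightarrow> 'a \<Rightarrow> real" where
  "split_dist c A t x = c x * (if x \<in> A then t else 1 - t)"

definition window :: "'a set \<Rightarrow> nat \<Rightarrow> real \<Rightarrow> real \<Rightarrow> 'a list set" where
  "window A n t \<eta> = {xs\<in>words n. \<bar>real (hits A xs) - real n * t\<bar> \<le> \<eta> * real n}"

lemma sum_UNIV_split: "(\<Sum>x\<in>UNIV. f x) = sum f A + sum f (- A)"
  for f :: "'a::finite \<Rightarrow> 'b::comm_monoid_add"
  by (metis Compl_eq_Diff_UNIV add.commute finite subset_UNIV sum.subset_diff)

lemma word_weight_split_dist:
  "word_weight (split_dist c A t) xs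
     = word_weight c xs * t ^ hits A xs * (1 - t) ^ (length xs - hits A xs)"
  by (induction xs) (auto simp: split_dist_def Suc_diff_le hits_le_length)

lemma window_subset_words: "window A n t \<eta> \<subseteq> words n"
  by (auto simp: window_def)

context
  fixes c :: "'a::finite \<Rightarrow> real" and A :: "'a set"
  assumes c_nonneg: "\<And>x. 0 \<le> c x" and sum_c_in: "sum c A = 1" and sum_c_out: "sum c (- A) = 1"
begin

lemma split_dist_nonneg: "0 \<le> t \<Longrightarrow> t \<le> 1 \<Longrightarrow> 0 \<le> split_dist c A t x"
  using c_nonneg[of x] by (simp add: split_dist_def)

lemma sum_split_dist_on: "sum (split_dist c A t) A = t" "sum (split_dist c A t) (- A) = 1 - t"
  using sum_c_in sum_c_out by (simp_all add: split_dist_def flip: sum_distrib_right)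

lemma sum_split_dist: "(\<Sum>x\<in>UNIV. split_dist c A t x) = 1"
  by (simp add: sum_UNIV_split[of _ A] sum_split_dist_on)

lemma split_dist_mean: "(\<Sum>x\<in>UNIV. split_dist c A t x * indicator A x) = t"
  by (simp add: sum_UNIV_split[of _ A] sum_split_dist_on)

lemma split_dist_variance: "(\<Sum>x\<in>UNIV. split_dist c A t x * (indicator A x - t)\<^sup>2) = t * (1 - t)"
proof -
  have "(\<Sum>x\<in>UNIV. split_dist c A t x * (indicator A x - t)\<^sup>2)
      = (\<Sum>x\<in>A. split_dist c A t x) * (1 - t)\<^sup>2 + (\<Sum>x\<in>- A. split_dist c A t x) * t\<^sup>2"
    by (auto simp: sum_UNIV_split[of _ A] sum_distrib_right intro!: arg_cong2[where f = "(+)"] sum.cong)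
  then show ?thesis
    by (simp add: sum_split_dist_on power2_eq_square algebra_simps)
qed

lemma window_concentration:
  assumes "0 < t" "t < 1" "0 < \<eta>" "0 < n" "1 / (2 * \<eta>\<^sup>2) \<le> real n"
  shows "1 / 2 \<le> (\<Sum>xs\<in>window A n t \<eta>. word_weight (split_dist c A t) xs)"
proof -
  have "t * (1 - t) \<le> 1 / 4"
    using zero_le_power2[of "2 * t - 1"] by (simp add: power2_eq_square algebra_simps)
  moreover have "1 / 2 \<le> \<eta>\<^sup>2 * real n"
    using assms(3,5) by (simp add: field_simps)
  ultimately have "t * (1 - t) / (\<eta>\<^sup>2 * real n) \<le> 1 / 2"
    using assms(3,4) by (simp add: divide_le_eq)
  moreover have "1 - t * (1 - t) / (\<eta>\<^sup>2 * real n)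
      \<le> (\<Sum>xs\<in>window A n t \<eta>. word_weight (split_dist c A t) xs)"
    using chebyshev_words[OF sum_split_dist split_dist_mean[symmetric] _ assms(3,4)]
      split_dist_nonneg assms(1,2)
    by (simp add: split_dist_variance window_def real_hits_conv_sum_list)
  ultimately show ?thesis
    by linarith
qed

lemma word_weight_split_dist_change:
  assumes "0 < s" "s < 1" "0 < t" "t < 1" "xs \<in> window A n t \<eta>"
  shows "exp (- real n * (binary_kl t s + \<eta> * \<bar>ln (t / s) - ln ((1 - t) / (1 - s))\<bar>))
      * word_weight (split_dist c A t) xs
    \<le> word_weight (split_dist c A s) xs"
proof -
  define a b where "a = ln (t / s)" and "b = ln ((1 - t) / (1 - s))"
  define k where "k = hits A xs"
  have len: "length xs = n" and "k \<le> n" and dev: "\<bar>real k - real n * t\<bar> \<le> \<eta> * real n"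
    using assms(5) hits_le_length[of A xs] by (auto simp: window_def words_def k_def)
  have "s ^ k = t ^ k * exp (- a) ^ k" "(1 - s) ^ (n - k) = (1 - t) ^ (n - k) * exp (- b) ^ (n - k)"
    using assms(1-4) by (simp_all add: a_def b_def exp_diff ln_div power_divide)
  moreover have "exp (real k * (- a) + real (n - k) * (- b)) = exp (- a) ^ k * exp (- b) ^ (n - k)"
    by (simp only: exp_add exp_of_nat_mult)
  ultimately have eq: "word_weight (split_dist c A s) xs
      = word_weight (split_dist c A t) xs * exp (real k * (- a) + real (n - k) * (- b))"
    unfolding word_weight_split_dist len k_def[symmetric] by (simp add: mult_ac)
  have "(real k - real n * t) * (a - b) \<le> \<eta> * real n * \<bar>a - b\<bar>"
    using dev abs_mult[of "real k - real n * t" "a - b"] abs_ge_self[of "(real k - real n * t) * (a - b)"]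
    by (metis abs_ge_zero mult_right_mono order_trans)
  then have "- real n * (binary_kl t s + \<eta> * \<bar>a - b\<bar>) \<le> real k * (- a) + real (n - k) * (- b)"
    using \<open>k \<le> n\<close> by (simp add: binary_kl_def a_def b_def of_nat_diff algebra_simps)
  moreover have "0 \<le> word_weight (split_dist c A t) xs"
    by (rule word_weight_nonneg) (use split_dist_nonneg assms(3,4) in auto)
  ultimately show ?thesis
    unfolding eq a_def[symmetric] b_def[symmetric] by (metis exp_le_cancel_iff mult.commute mult_right_mono)
qed

lemma window_mass_lower:
  assumes "0 < s" "s < 1" "0 < t" "t < 1" "0 < \<eta>" "0 < n" "1 / (2 * \<eta>\<^sup>2) \<le> real n"
  shows "exp (- real n * (binary_kl t s + \<eta> * \<bar>ln (t / s) - ln ((1 - t) / (1 - s))\<bar>)) / 2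
    \<le> (\<Sum>xs\<in>window A n t \<eta>. word_weight (split_dist c A s) xs)"
proof -
  define E where "E = exp (- real n * (binary_kl t s + \<eta> * \<bar>ln (t / s) - ln ((1 - t) / (1 - s))\<bar>))"
  have "E / 2 \<le> E * (\<Sum>xs\<in>window A n t \<eta>. word_weight (split_dist c A t) xs)"
    using window_concentration[OF assms(3-7)] by (simp add: E_def)
  also have "\<dots> \<le> (\<Sum>xs\<in>window A n t \<eta>. word_weight (split_dist c A s) xs)"
    unfolding sum_distrib_left E_def using assms(1-4) by (intro sum_mono word_weight_split_dist_change)
  finally show ?thesis
    by (simp add: E_def)
qed

end

lemma window_separation:
  assumes "xs \<in> window A n t \<eta>" "ys \<in> window A n t' \<eta>" "t + \<delta> \<le> t'" "\<eta> \<le> \<delta> / 4"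
  shows "real (hits A xs) + real n * \<delta> / 2 \<le> real (hits A ys)"
proof -
  have "real n * (\<delta> / 2) \<le> real n * (t' - t - 2 * \<eta>)"
    using assms(3,4) by (intro mult_left_mono) auto
  then show ?thesis
    using assms(1,2) by (auto simp: window_def algebra_simps)
qed

lemma two_of_three_on_same_side:
  assumes "P t1 \<or> Q t1" "P t2 \<or> Q t2" "P t3 \<or> Q t3"
    and "t1 + \<delta> \<le> t2" "t2 + \<delta> \<le> t3" "0 \<le> (\<delta>::real)"
  obtains t t' where "t + \<delta> \<le> t'" "P t \<and> P t' \<or> Q t \<and> Q t'"
proof -
  have "t1 + \<delta> \<le> t3"
    using assms(4-6) by linarith
  with assms(1-5) that show ?thesis
    by blast
qed

(* The divergence binary_kl (s +- delta) s is of order delta^2, while the gain is linear in delta. *)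
lemma window_parameters:
  assumes "0 < s" "s < 1" "0 < g"
  obtains \<delta> \<eta> where "0 < \<delta>" "0 < \<eta>" "\<eta> \<le> \<delta> / 4" "0 < s - \<delta>" "s + \<delta> < 1"
    "\<And>t. t \<in> {s - \<delta>, s, s + \<delta>} \<Longrightarrow>
       binary_kl t s + \<eta> * \<bar>ln (t / s) - ln ((1 - t) / (1 - s))\<bar> \<le> g * \<delta> / 4"
proof -
  define q where "q = s * (1 - s)"
  have "0 < q"
    using assms by (simp add: q_def)
  define \<delta> where "\<delta> = min (min (s / 2) ((1 - s) / 2)) (g * q / 8)"
  have \<delta>: "0 < \<delta>" "\<delta> \<le> s / 2" "\<delta> \<le> (1 - s) / 2" "\<delta> \<le> g * q / 8"
    using assms \<open>0 < q\<close> by (auto simp: \<delta>_def min_def)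
  define K where "K t = \<bar>ln (t / s) - ln ((1 - t) / (1 - s))\<bar>" for t
  define M where "M = K (s - \<delta>) + K (s + \<delta>) + 1"
  have "0 < M"
    by (simp add: M_def K_def add_nonneg_pos)
  define \<eta> where "\<eta> = min (\<delta> / 4) (g * \<delta> / (8 * M))"
  have \<eta>: "0 < \<eta>" "\<eta> \<le> \<delta> / 4"
    using assms \<delta>(1) \<open>0 < M\<close> by (simp_all add: \<eta>_def)
  have "\<eta> * M \<le> g * \<delta> / (8 * M) * M"
    using \<open>0 < M\<close> by (intro mult_right_mono) (simp_all add: \<eta>_def)
  then have \<eta>M: "\<eta> * M \<le> g * \<delta> / 8"
    using \<open>0 < M\<close> by simp
  have "binary_kl t s + \<eta> * K t \<le> g * \<delta> / 4" if "t \<in> {s - \<delta>, s, s + \<delta>}" for t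
  proof -
    have "binary_kl t s \<le> \<delta>\<^sup>2 / q"
      using that \<delta> assms binary_kl_le_chi_square[of s t]
      by (auto simp: q_def binary_kl_def power2_eq_square)
    also have "\<dots> \<le> g * \<delta> / 8"
      using \<delta> \<open>0 < q\<close> by (simp add: power2_eq_square divide_le_eq mult.commute mult_left_mono)
    finally have "binary_kl t s \<le> g * \<delta> / 8" .
    moreover have "\<eta> * K t \<le> \<eta> * M"
      using that \<eta>(1) by (intro mult_left_mono) (auto simp: M_def K_def)
    ultimately show ?thesis
      using \<eta>M by linarith
  qed
  then show ?thesis
    using that \<delta> \<eta> by (auto simp: K_def)
qed

section \<open>Tests of diagonal states\<close>

lemma is_test_diag_entry:
  assumes "finite I" "is_test I T" "i \<in> I"
  shows "0 \<le> Re (T i i)" "Re (T i i) \<le> 1"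
proof -
  define v where "v j = (if j = i then 1 else 0 :: complex)" for j
  have "(\<Sum>j\<in>I. cnj (v k) * T k j * v j) = cnj (v k) * T k i" for k
    using assms(1,3) by (simp add: v_def if_distrib[of "\<lambda>z. _ * z"] sum.delta' cong: if_cong)
  moreover have "(\<Sum>k\<in>I. cnj (v k) * T k i) = T i i"
    using assms(1,3) by (simp add: v_def if_distrib[of "\<lambda>z. cnj z * _"] sum.delta cong: if_cong)
  ultimately have "quad_form I T v = T i i"
    by (simp add: quad_form_def)
  moreover have "(\<Sum>j\<in>I. (cmod (v j))\<^sup>2) = 1"
    using assms(1,3) by (simp add: v_def if_distrib[of "\<lambda>z. (cmod z)\<^sup>2"] sum.delta cong: if_cong)
  ultimately show "0 \<le> Re (T i i)" "Re (T i i) \<le> 1"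
    using assms(2) unfolding is_test_def by metis+
qed

lemma is_test_diag:
  assumes "finite I" "\<And>i. i \<in> I \<Longrightarrow> 0 \<le> u i \<and> u i \<le> 1"
  shows "is_test I (\<lambda>i j. if i = j then complex_of_real (u i) else 0)"
proof -
  have "(\<Sum>j\<in>I. cnj (v i) * (if i = j then complex_of_real (u i) else 0) * v j)
      = complex_of_real (u i * (cmod (v i))\<^sup>2)" if "i \<in> I" for v i
  proof -
    have "(\<Sum>j\<in>I. cnj (v i) * (if i = j then complex_of_real (u i) else 0) * v j)
        = (\<Sum>j\<in>I. if j = i then complex_of_real (u i) * (cnj (v i) * v i) else 0)"
      by (intro sum.cong) auto
    also have "\<dots> = complex_of_real (u i) * (cnj (v i) * v i)"
      using assms(1) that by simp
    finally show ?thesis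
      by (simp add: mult.commute[of "cnj _"] flip: complex_norm_square)
  qed
  then have "quad_form I (\<lambda>i j. if i = j then complex_of_real (u i) else 0) v
      = complex_of_real (\<Sum>i\<in>I. u i * (cmod (v i))\<^sup>2)" for v
    by (simp add: quad_form_def of_real_sum)
  moreover have "(\<Sum>i\<in>I. u i * (cmod (v i))\<^sup>2) \<le> (\<Sum>i\<in>I. (cmod (v i))\<^sup>2)" for v
    using assms(2) by (intro sum_mono) (simp add: mult_left_le_one_le)
  ultimately show ?thesis
    using assms(2) by (simp add: is_test_def sum_nonneg)
qed

lemma trace_prod_diagonal:
  assumes "finite I" "\<And>i j. i \<in> I \<Longrightarrow> j \<in> I \<Longrightarrow> i \<noteq> j \<Longrightarrow> X i j = 0"
  shows "trace_prod I X T = (\<Sum>i\<in>I. X i i * T i i)"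
  unfolding trace_prod_def
proof (rule sum.cong[OF refl])
  fix i assume "i \<in> I"
  then have "(\<Sum>j\<in>I. X i j * T j i) = (\<Sum>j\<in>I. if j = i then X i j * T j i else 0)"
    using assms(2) by (intro sum.cong) auto
  then show "(\<Sum>j\<in>I. X i j * T j i) = X i i * T i i"
    using assms(1) \<open>i \<in> I\<close> by (simp add: sum.delta')
qed

lemma tensor_pow_diag_op:
  assumes "xs \<in> words n" "ys \<in> words n"
  shows "tensor_pow (diag_op f) n xs ys = (if xs = ys then complex_of_real (word_weight f xs) else 0)"
proof (cases "xs = ys")
  case True
  then show ?thesis
    using assms by (simp add: tensor_pow_def diag_op_def word_weight_conv_nth words_def)
next
  case False
  moreover have "length xs = n" "length ys = n"
    using assms by (simp_all add: length_of_words)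
  ultimately obtain i where "i < n" "xs ! i \<noteq> ys ! i"
    using nth_equalityI by metis
  then have "tensor_pow (diag_op f) n xs ys = 0"
    unfolding tensor_pow_def by (intro prod_zero) (auto simp: diag_op_def)
  with False show ?thesis
    by simp
qed

lemma test_meas_tensor_pow_diag_op:
  fixes f :: "'a::finite \<Rightarrow> real"
  shows "test_meas (words n) T (tensor_pow (diag_op f) n)
     = ((\<Sum>xs\<in>words n. Re (T xs xs) * word_weight f xs),
        (\<Sum>xs\<in>words n. (1 - Re (T xs xs)) * word_weight f xs))"
proof -
  have "trace_prod (words n) (tensor_pow (diag_op f) n) S
      = (\<Sum>xs\<in>words n. complex_of_real (word_weight f xs) * S xs xs)" for S
    by (subst trace_prod_diagonal) (simp_all add: finite_words tensor_pow_diag_op)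
  then show ?thesis
    by (simp add: test_meas_def id_op_def mult.commute)
qed

definition outcome_affinity ::
    "real \<Rightarrow> ('a \<Rightarrow> real) \<Rightarrow> ('a \<Rightarrow> real) \<Rightarrow> nat \<Rightarrow> ('a list \<Rightarrow> real) \<Rightarrow> real" where
  "outcome_affinity \<alpha> p q n v =
     (\<Sum>xs\<in>words n. v xs * word_weight p xs) powr \<alpha> * (\<Sum>xs\<in>words n. v xs * word_weight q xs) powr (1 - \<alpha>)"

lemma outcome_affinity_nonneg: "0 \<le> outcome_affinity \<alpha> p q n v"
  by (simp add: outcome_affinity_def)

definition test_affinity ::
    "real \<Rightarrow> ('a \<Rightarrow> real) \<Rightarrow> ('a \<Rightarrow> real) \<Rightarrow> nat \<Rightarrow> ('a list \<Rightarrow> real) \<Rightarrow> real" where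
  "test_affinity \<alpha> p q n u = outcome_affinity \<alpha> p q n u + outcome_affinity \<alpha> p q n (\<lambda>xs. 1 - u xs)"

lemma renyi_pair_test_meas_tensor_pow_diag_op:
  fixes p q :: "'a::finite \<Rightarrow> real"
  shows "renyi_pair \<alpha> (test_meas (words n) T (tensor_pow (diag_op p) n)) (test_meas (words n) T (tensor_pow (diag_op q) n))
     = ln (test_affinity \<alpha> p q n (\<lambda>xs. Re (T xs xs))) / (\<alpha> - 1)"
  by (simp add: renyi_pair_def renyi_def UNIV_bool test_meas_tensor_pow_diag_op test_affinity_def
      outcome_affinity_def add.commute)

section \<open>Hoelder bounds for the test affinity\<close>

lemma powr_mult_powr_one_minus: "0 \<le> x \<Longrightarrow> x powr \<alpha> * x powr (1 - \<alpha>) = (x::real)"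
  by (cases "x = 0") (simp_all flip: powr_add)

lemma powr_mult_powr_le_convex_comb:
  fixes x y :: real
  assumes "0 \<le> x" "0 \<le> y" "0 < \<alpha>" "\<alpha> < 1"
  shows "x powr \<alpha> * y powr (1 - \<alpha>) \<le> \<alpha> * x + (1 - \<alpha>) * y"
proof (cases "x = 0 \<or> y = 0")
  case False
  with assms show ?thesis
    by (intro Youngs_inequality_0) auto
qed (use assms in auto)

lemma holder_sum:
  fixes f g :: "'b \<Rightarrow> real"
  assumes "finite S" "\<And>s. s \<in> S \<Longrightarrow> 0 \<le> f s" "\<And>s. s \<in> S \<Longrightarrow> 0 \<le> g s" "0 < \<alpha>" "\<alpha> < 1"
  shows "(\<Sum>s\<in>S. f s powr \<alpha> * g s powr (1 - \<alpha>)) \<le> sum f S powr \<alpha> * sum g S powr (1 - \<alpha>)"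
proof (cases "sum f S = 0 \<or> sum g S = 0")
  case True
  then have "\<forall>s\<in>S. f s = 0 \<or> g s = 0"
    using assms(1-3) sum_nonneg_eq_0_iff by blast
  then have "(\<Sum>s\<in>S. f s powr \<alpha> * g s powr (1 - \<alpha>)) = 0"
    by (intro sum.neutral) auto
  then show ?thesis
    by simp
next
  case False
  define F G where "F = sum f S" and "G = sum g S"
  have "0 < F" "0 < G"
    using False assms(2,3) sum_nonneg[of S f] sum_nonneg[of S g] by (auto simp: F_def G_def)
  have "f s powr \<alpha> * g s powr (1 - \<alpha>)
      \<le> F powr \<alpha> * G powr (1 - \<alpha>) * (\<alpha> * (f s / F) + (1 - \<alpha>) * (g s / G))" if "s \<in> S" for s
  proof -
    have "f s powr \<alpha> * g s powr (1 - \<alpha>)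
        = F powr \<alpha> * G powr (1 - \<alpha>) * ((f s / F) powr \<alpha> * (g s / G) powr (1 - \<alpha>))"
      using \<open>0 < F\<close> \<open>0 < G\<close> assms(2,3) that by (simp add: powr_divide)
    also have "\<dots> \<le> F powr \<alpha> * G powr (1 - \<alpha>) * (\<alpha> * (f s / F) + (1 - \<alpha>) * (g s / G))"
      using \<open>0 < F\<close> \<open>0 < G\<close> assms(2-5) that
      by (intro mult_left_mono powr_mult_powr_le_convex_comb) auto
    finally show ?thesis .
  qed
  then have "(\<Sum>s\<in>S. f s powr \<alpha> * g s powr (1 - \<alpha>))
      \<le> (\<Sum>s\<in>S. F powr \<alpha> * G powr (1 - \<alpha>) * (\<alpha> * (f s / F) + (1 - \<alpha>) * (g s / G)))"
    by (rule sum_mono)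
  also have "\<dots> = F powr \<alpha> * G powr (1 - \<alpha>) * (\<alpha> * (F / F) + (1 - \<alpha>) * (G / G))"
    by (simp add: F_def G_def sum.distrib flip: sum_distrib_left sum_divide_distrib)
  finally show ?thesis
    using \<open>0 < F\<close> \<open>0 < G\<close> by (simp add: F_def G_def)
qed

lemma word_weight_powr_mult:
  assumes "\<And>x. 0 \<le> p x" "\<And>x. 0 \<le> q x"
  shows "word_weight p xs powr \<alpha> * word_weight q xs powr (1 - \<alpha>)
     = word_weight (\<lambda>x. p x powr \<alpha> * q x powr (1 - \<alpha>)) xs"
  by (induction xs) (simp_all add: powr_mult word_weight_nonneg assms mult_ac)

lemma outcome_affinity_ge:
  fixes p q :: "'a::finite \<Rightarrow> real"
  assumes "\<And>x. 0 \<le> p x" "\<And>x. 0 \<le> q x" "0 < \<alpha>" "\<alpha> < 1" "\<And>xs. xs \<in> words n \<Longrightarrow> 0 \<le> v xs"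
  shows "(\<Sum>xs\<in>words n. v xs * word_weight (\<lambda>x. p x powr \<alpha> * q x powr (1 - \<alpha>)) xs)
    \<le> outcome_affinity \<alpha> p q n v"
proof -
  have pointwise: "v xs * word_weight (\<lambda>x. p x powr \<alpha> * q x powr (1 - \<alpha>)) xs
      = (v xs * word_weight p xs) powr \<alpha> * (v xs * word_weight q xs) powr (1 - \<alpha>)" if "xs \<in> words n" for xs
    using assms(1,2) assms(5)[OF that]
    by (simp add: powr_mult word_weight_nonneg powr_mult_powr_one_minus mult_ac
        flip: word_weight_powr_mult)
  have "(\<Sum>xs\<in>words n. (v xs * word_weight p xs) powr \<alpha> * (v xs * word_weight q xs) powr (1 - \<alpha>))
      \<le> outcome_affinity \<alpha> p q n v"
    unfolding outcome_affinity_def using assms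
    by (intro holder_sum) (auto simp: finite_words word_weight_nonneg)
  then show ?thesis
    by (simp add: pointwise)
qed

lemma test_affinity_ge_power:
  fixes p q :: "'a::finite \<Rightarrow> real"
  assumes "\<And>x. 0 \<le> p x" "\<And>x. 0 \<le> q x" "0 < \<alpha>" "\<alpha> < 1"
    and "\<And>xs. xs \<in> words n \<Longrightarrow> 0 \<le> u xs \<and> u xs \<le> 1"
  shows "(\<Sum>x\<in>UNIV. p x powr \<alpha> * q x powr (1 - \<alpha>)) ^ n \<le> test_affinity \<alpha> p q n u"
proof -
  let ?g = "\<lambda>x. p x powr \<alpha> * q x powr (1 - \<alpha>)"
  have "(\<Sum>x\<in>UNIV. ?g x) ^ n
      = (\<Sum>xs\<in>words n. u xs * word_weight ?g xs) + (\<Sum>xs\<in>words n. (1 - u xs) * word_weight ?g xs)"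
    by (simp add: sum_words_word_weight algebra_simps flip: sum.distrib)
  also have "\<dots> \<le> test_affinity \<alpha> p q n u"
    unfolding test_affinity_def using assms by (intro add_mono outcome_affinity_ge) auto
  finally show ?thesis .
qed

lemma renyi_pair_test_meas_le:
  fixes p q :: "'a::finite \<Rightarrow> real"
  assumes "\<alpha> < 1" "0 < L"
    and "\<And>u. \<forall>xs\<in>words n. 0 \<le> u xs \<and> u xs \<le> 1 \<Longrightarrow> L \<le> test_affinity \<alpha> p q n u"
    and "is_test (words n) T"
  shows "renyi_pair \<alpha> (test_meas (words n) T (tensor_pow (diag_op p) n))
      (test_meas (words n) T (tensor_pow (diag_op q) n)) \<le> ln L / (\<alpha> - 1)"
proof -
  have "\<forall>xs\<in>words n. 0 \<le> Re (T xs xs) \<and> Re (T xs xs) \<le> 1"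
    using is_test_diag_entry[OF finite_words assms(4)] by simp
  then have "L \<le> test_affinity \<alpha> p q n (\<lambda>xs. Re (T xs xs))"
    by (rule assms(3))
  then have "ln L \<le> ln (test_affinity \<alpha> p q n (\<lambda>xs. Re (T xs xs)))"
    using assms(2) by simp
  then have "ln (test_affinity \<alpha> p q n (\<lambda>xs. Re (T xs xs))) / (\<alpha> - 1) \<le> ln L / (\<alpha> - 1)"
    using assms(1) by (intro divide_right_mono_neg) auto
  then show ?thesis
    by (simp only: renyi_pair_test_meas_tensor_pow_diag_op)
qed

lemma D_test_n_le:
  fixes p q :: "'a::finite \<Rightarrow> real"
  assumes "\<alpha> < 1" "0 < L"
    and "\<And>u. \<forall>xs\<in>words n. 0 \<le> u xs \<and> u xs \<le> 1 \<Longrightarrow> L \<le> test_affinity \<alpha> p q n u"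
  shows "D_test_n \<alpha> p q n \<le> ln L / (\<alpha> - 1)"
proof -
  have "is_test (words n :: 'a list set) (\<lambda>i j. if i = j then complex_of_real 0 else 0)"
    by (rule is_test_diag[OF finite_words]) simp
  then have "{T. is_test (words n :: 'a list set) T} \<noteq> {}"
    by blast
  then show ?thesis
    unfolding D_test_n_def D_test_def
    by (rule cSUP_least) (simp add: renyi_pair_test_meas_le[OF assms])
qed

lemma renyi_pair_le_D_test_n:
  fixes p q :: "'a::finite \<Rightarrow> real"
  assumes "\<alpha> < 1" "0 < L"
    and "\<And>u. \<forall>xs\<in>words n. 0 \<le> u xs \<and> u xs \<le> 1 \<Longrightarrow> L \<le> test_affinity \<alpha> p q n u"
    and "is_test (words n) T"
  shows "renyi_pair \<alpha> (test_meas (words n) T (tensor_pow (diag_op p) n))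
      (test_meas (words n) T (tensor_pow (diag_op q) n)) \<le> D_test_n \<alpha> p q n"
proof -
  have "bdd_above ((\<lambda>T. renyi_pair \<alpha> (test_meas (words n) T (tensor_pow (diag_op p) n))
      (test_meas (words n) T (tensor_pow (diag_op q) n))) ` {T. is_test (words n :: 'a list set) T})"
    by (rule bdd_aboveI2[where M = "ln L / (\<alpha> - 1)"]) (simp add: renyi_pair_test_meas_le[OF assms(1-3)])
  then show ?thesis
    unfolding D_test_n_def D_test_def by (rule cSUP_upper[rotated]) (simp add: assms(4))
qed

lemma D_test_n_le_renyi:
  fixes p q :: "'a::finite \<Rightarrow> real"
  assumes "\<And>x. 0 \<le> p x" "\<And>x. 0 \<le> q x" "0 < \<alpha>" "\<alpha> < 1"
    and "0 < (\<Sum>x\<in>UNIV. p x powr \<alpha> * q x powr (1 - \<alpha>))"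
  shows "D_test_n \<alpha> p q n \<le> real n * renyi UNIV \<alpha> p q"
proof -
  have "D_test_n \<alpha> p q n \<le> ln ((\<Sum>x\<in>UNIV. p x powr \<alpha> * q x powr (1 - \<alpha>)) ^ n) / (\<alpha> - 1)"
    using assms by (intro D_test_n_le test_affinity_ge_power) simp_all
  then show ?thesis
    using assms(5) by (simp add: renyi_def ln_realpow)
qed

lemma sum_mult_ge_on_subset:
  fixes v f :: "'b \<Rightarrow> real"
  assumes "finite S" "H \<subseteq> S" "\<And>s. s \<in> S \<Longrightarrow> 0 \<le> v s" "\<And>s. s \<in> S \<Longrightarrow> 0 \<le> f s"
    and "\<And>s. s \<in> H \<Longrightarrow> c \<le> f s"
  shows "c * sum v H \<le> (\<Sum>s\<in>S. v s * f s)"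
proof -
  have "c * sum v H = (\<Sum>s\<in>H. c * v s)"
    by (simp add: sum_distrib_left)
  also have "\<dots> \<le> (\<Sum>s\<in>H. v s * f s)"
    using assms(2,3,5) by (intro sum_mono) (metis mult.commute mult_right_mono subsetD)
  also have "\<dots> \<le> (\<Sum>s\<in>S. v s * f s)"
    using assms(1-4) by (intro sum_mono2) auto
  finally show ?thesis .
qed

lemma exp_moment_product_ge_gap:
  fixes v \<Lambda> :: "'b \<Rightarrow> real"
  assumes "finite S" "H \<subseteq> S" "L \<subseteq> S" "\<And>s. s \<in> S \<Longrightarrow> 0 \<le> v s" "0 < \<alpha>" "\<alpha> < 1"
    and "0 < m" "m \<le> sum v H" "m \<le> sum v L"
    and gap: "\<And>x y. x \<in> H \<Longrightarrow> y \<in> L \<Longrightarrow> \<Lambda> y + \<gamma> \<le> \<Lambda> x"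
  shows "m * exp (\<alpha> * (1 - \<alpha>) * \<gamma>)
    \<le> (\<Sum>s\<in>S. v s * exp ((1 - \<alpha>) * \<Lambda> s)) powr \<alpha> * (\<Sum>s\<in>S. v s * exp (- \<alpha> * \<Lambda> s)) powr (1 - \<alpha>)"
proof -
  have "H \<noteq> {}"
    using assms(7,8) by auto
  have "finite H"
    using assms(1,2) by (rule finite_subset[rotated])
  define h where "h = Min (\<Lambda> ` H)"
  have h_le: "h \<le> \<Lambda> x" if "x \<in> H" for x
    using that \<open>finite H\<close> by (simp add: h_def)
  have le_h: "\<Lambda> y \<le> h - \<gamma>" if "y \<in> L" for y
  proof -
    have "\<Lambda> y + \<gamma> \<le> h"
      using \<open>H \<noteq> {}\<close> \<open>finite H\<close> gap[OF _ that] by (simp add: h_def Min_ge_iff)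
    then show ?thesis
      by simp
  qed
  have "exp ((1 - \<alpha>) * h) * m \<le> exp ((1 - \<alpha>) * h) * sum v H"
    using assms(8) by simp
  also have "\<dots> \<le> (\<Sum>s\<in>S. v s * exp ((1 - \<alpha>) * \<Lambda> s))"
    by (rule sum_mult_ge_on_subset) (use assms(1,2,4,6) h_le in auto)
  finally have high: "exp ((1 - \<alpha>) * h) * m \<le> (\<Sum>s\<in>S. v s * exp ((1 - \<alpha>) * \<Lambda> s))" .
  have "exp (- \<alpha> * (h - \<gamma>)) * m \<le> exp (- \<alpha> * (h - \<gamma>)) * sum v L"
    using assms(9) by simp
  also have "\<dots> \<le> (\<Sum>s\<in>S. v s * exp (- \<alpha> * \<Lambda> s))"
    by (rule sum_mult_ge_on_subset) (use assms(1,3,4,5) le_h in auto)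
  finally have "exp (- \<alpha> * (h - \<gamma>)) * m \<le> (\<Sum>s\<in>S. v s * exp (- \<alpha> * \<Lambda> s))" .
  with high have "(exp ((1 - \<alpha>) * h) * m) powr \<alpha> * (exp (- \<alpha> * (h - \<gamma>)) * m) powr (1 - \<alpha>)
    \<le> (\<Sum>s\<in>S. v s * exp ((1 - \<alpha>) * \<Lambda> s)) powr \<alpha> * (\<Sum>s\<in>S. v s * exp (- \<alpha> * \<Lambda> s)) powr (1 - \<alpha>)"
    using assms(5-7) by (intro mult_mono powr_mono2) auto
  moreover have "(exp ((1 - \<alpha>) * h) * m) powr \<alpha> * (exp (- \<alpha> * (h - \<gamma>)) * m) powr (1 - \<alpha>)
      = m * exp (\<alpha> * (1 - \<alpha>) * \<gamma>)"
    using assms(7) by (simp add: powr_mult powr_def exp_add[symmetric] ln_mult algebra_simps)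
      (simp add: exp_add exp_diff)
  ultimately show ?thesis
    by simp
qed

section \<open>Block-proportional pairs of states\<close>

locale block_proportional =
  fixes c :: "'a::finite \<Rightarrow> real" and A :: "'a set" and a b \<alpha> :: real
  assumes c_nonneg: "\<And>x. 0 \<le> c x" and sum_c_in: "sum c A = 1" and sum_c_out: "sum c (- A) = 1"
    and a_bounds: "0 < a" "a < 1" and b_bounds: "0 < b" "b < 1" and a_ne_b: "a \<noteq> b"
    and \<alpha>_bounds: "0 < \<alpha>" "\<alpha> < 1"
begin

definition affinity_in :: real where "affinity_in = a powr \<alpha> * b powr (1 - \<alpha>)"
definition affinity_out :: real where "affinity_out = (1 - a) powr \<alpha> * (1 - b) powr (1 - \<alpha>)"
definition affinity :: real where "affinity = affinity_in + affinity_out"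
definition tilt :: real where "tilt = affinity_in / affinity"
definition llr_in :: real where "llr_in = ln (a / b)"
definition llr_out :: real where "llr_out = ln ((1 - a) / (1 - b))"
definition gap_rate :: real where "gap_rate = \<alpha> * (1 - \<alpha>) * \<bar>llr_in - llr_out\<bar>"

definition llr :: "'a list \<Rightarrow> real" where
  "llr xs = real (hits A xs) * llr_in + real (length xs - hits A xs) * llr_out"

(* tilted xs is the product of the letterwise geometric means rho^alpha sigma^(1-alpha). *)
definition tilted :: "'a list \<Rightarrow> real" where
  "tilted xs = affinity ^ length xs * word_weight (split_dist c A tilt) xs"

lemma affinity_pos: "0 < affinity_in" "0 < affinity_out" "0 < affinity"
  using a_bounds b_bounds by (simp_all add: affinity_in_def affinity_out_def affinity_def add_pos_pos)

lemma tilt_bounds: "0 < tilt" "tilt < 1"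
  using affinity_pos by (simp_all add: tilt_def affinity_def)

lemma sum_geometric_mean:
  "(\<Sum>x\<in>UNIV. split_dist c A a x powr \<alpha> * split_dist c A b x powr (1 - \<alpha>)) = affinity"
proof -
  have "split_dist c A a x powr \<alpha> * split_dist c A b x powr (1 - \<alpha>)
      = c x * (if x \<in> A then affinity_in else affinity_out)" for x
  proof -
    have "(c x * p) powr \<alpha> * (c x * q) powr (1 - \<alpha>) = c x * (p powr \<alpha> * q powr (1 - \<alpha>))"
      if "0 \<le> p" "0 \<le> q" for p q
    proof -
      have "(c x * p) powr \<alpha> * (c x * q) powr (1 - \<alpha>)
          = (c x powr \<alpha> * c x powr (1 - \<alpha>)) * (p powr \<alpha> * q powr (1 - \<alpha>))"
        using that c_nonneg[of x] by (simp add: powr_mult mult_ac)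
      then show ?thesis
        using c_nonneg[of x] by (simp add: powr_mult_powr_one_minus)
    qed
    then show ?thesis
      using a_bounds b_bounds by (simp add: split_dist_def affinity_in_def affinity_out_def)
  qed
  then show ?thesis
    by (simp add: sum_UNIV_split[of _ A] affinity_def sum_c_in sum_c_out flip: sum_distrib_right)
qed

lemma renyi_eq: "renyi UNIV \<alpha> (split_dist c A a) (split_dist c A b) = ln affinity / (\<alpha> - 1)"
  by (simp add: renyi_def sum_geometric_mean)

lemma test_affinity_ge_affinity_power:
  assumes "\<And>xs. xs \<in> words n \<Longrightarrow> 0 \<le> u xs \<and> u xs \<le> 1"
  shows "affinity ^ n \<le> test_affinity \<alpha> (split_dist c A a) (split_dist c A b) n u"
proof -
  have "(\<Sum>x\<in>UNIV. split_dist c A a x powr \<alpha> * split_dist c A b x powr (1 - \<alpha>)) ^ n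
      \<le> test_affinity \<alpha> (split_dist c A a) (split_dist c A b) n u"
    by (rule test_affinity_ge_power)
      (use \<alpha>_bounds assms a_bounds b_bounds split_dist_nonneg[OF c_nonneg sum_c_in sum_c_out] in auto)
  then show ?thesis
    by (simp add: sum_geometric_mean)
qed

lemma tilted_nonneg: "0 \<le> tilted xs"
  unfolding tilted_def using affinity_pos tilt_bounds split_dist_nonneg[OF c_nonneg sum_c_in sum_c_out]
  by (intro mult_nonneg_nonneg word_weight_nonneg) auto

lemma tilted_mult_exp_llr:
  "tilted xs * exp (r * llr xs)
     = word_weight c xs * (affinity_in * exp (r * llr_in)) ^ hits A xs
        * (affinity_out * exp (r * llr_out)) ^ (length xs - hits A xs)"
proof -
  define k m where "k = hits A xs" and "m = length xs - hits A xs"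
  have in_eq: "affinity * tilt = affinity_in" and out_eq: "affinity * (1 - tilt) = affinity_out"
    using affinity_pos by (simp_all add: tilt_def affinity_def field_simps)
  have "length xs = k + m"
    by (simp add: k_def m_def hits_le_length)
  moreover have "exp (r * llr xs) = exp (r * llr_in) ^ k * exp (r * llr_out) ^ m"
    by (simp add: llr_def k_def m_def algebra_simps exp_add flip: exp_of_nat_mult)
  ultimately show ?thesis
    unfolding tilted_def word_weight_split_dist k_def[symmetric] m_def[symmetric]
      in_eq[symmetric] out_eq[symmetric]
    by (simp add: power_add power_mult_distrib mult_ac)
qed

lemma word_weight_conv_tilted:
  "word_weight (split_dist c A a) xs = tilted xs * exp ((1 - \<alpha>) * llr xs)"
  "word_weight (split_dist c A b) xs = tilted xs * exp (- \<alpha> * llr xs)"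
proof -
  have "affinity_in * exp ((1 - \<alpha>) * llr_in) = a" "affinity_out * exp ((1 - \<alpha>) * llr_out) = 1 - a"
    "affinity_in * exp (- \<alpha> * llr_in) = b" "affinity_out * exp (- \<alpha> * llr_out) = 1 - b"
    using a_bounds b_bounds
    by (simp_all add: affinity_in_def affinity_out_def llr_in_def llr_out_def powr_def ln_div algebra_simps
        flip: exp_add)
  then show "word_weight (split_dist c A a) xs = tilted xs * exp ((1 - \<alpha>) * llr xs)"
    "word_weight (split_dist c A b) xs = tilted xs * exp (- \<alpha> * llr xs)"
    by (simp_all only: tilted_mult_exp_llr word_weight_split_dist)
qed

lemma llr_conv_hits: "xs \<in> words n \<Longrightarrow> llr xs = real n * llr_out + real (hits A xs) * (llr_in - llr_out)"
  using hits_le_length[of A xs] by (simp add: llr_def length_of_words of_nat_diff algebra_simps)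

lemma llr_in_ne_llr_out: "llr_in \<noteq> llr_out"
proof
  assume "llr_in = llr_out"
  then have "a / b = (1 - a) / (1 - b)"
    using a_bounds b_bounds by (simp add: llr_in_def llr_out_def)
  then show False
    using a_bounds b_bounds a_ne_b by (simp add: field_simps)
qed

lemma gap_rate_pos: "0 < gap_rate"
  using \<alpha>_bounds llr_in_ne_llr_out by (simp add: gap_rate_def)

lemma outcome_affinity_conv_tilted:
  "outcome_affinity \<alpha> (split_dist c A a) (split_dist c A b) n v
     = (\<Sum>xs\<in>words n. v xs * tilted xs * exp ((1 - \<alpha>) * llr xs)) powr \<alpha>
       * (\<Sum>xs\<in>words n. v xs * tilted xs * exp (- \<alpha> * llr xs)) powr (1 - \<alpha>)"
  by (simp add: outcome_affinity_def word_weight_conv_tilted mult.assoc)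

lemma outcome_affinity_two_windows:
  assumes "t + \<delta> \<le> t'" "\<eta> \<le> \<delta> / 4" "\<And>xs. xs \<in> words n \<Longrightarrow> 0 \<le> v xs" "0 < m"
    and "m \<le> (\<Sum>xs\<in>window A n t \<eta>. v xs * tilted xs)" "m \<le> (\<Sum>xs\<in>window A n t' \<eta>. v xs * tilted xs)"
  shows "m * exp (gap_rate * (real n * \<delta> / 2))
    \<le> outcome_affinity \<alpha> (split_dist c A a) (split_dist c A b) n v"
proof -
  define d where "d = llr_in - llr_out"
  define \<gamma> where "\<gamma> = real n * \<delta> / 2 * \<bar>d\<bar>"
  have gap_bound: "m * exp (\<alpha> * (1 - \<alpha>) * \<gamma>) \<le> outcome_affinity \<alpha> (split_dist c A a) (split_dist c A b) n v"
    if "H \<subseteq> words n" "L \<subseteq> words n" "m \<le> (\<Sum>xs\<in>H. v xs * tilted xs)" "m \<le> (\<Sum>xs\<in>L. v xs * tilted xs)"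
      and "\<And>x y. x \<in> H \<Longrightarrow> y \<in> L \<Longrightarrow> llr y + \<gamma> \<le> llr x" for H L
    unfolding outcome_affinity_conv_tilted
    by (rule exp_moment_product_ge_gap[OF finite_words that(1,2) _ \<alpha>_bounds assms(4) that(3-5)])
      (simp add: assms(3) tilted_nonneg)
  have llr_diff: "llr x - llr y = (real (hits A x) - real (hits A y)) * d"
    if "x \<in> words n" "y \<in> words n" for x y
    using that by (simp add: llr_conv_hits d_def algebra_simps)
  have sep: "real (hits A y) + real n * \<delta> / 2 \<le> real (hits A x)"
    if "y \<in> window A n t \<eta>" "x \<in> window A n t' \<eta>" for x y
    using window_separation[OF that assms(1,2)] .
  show ?thesis
  proof (cases "0 \<le> d")
    case True
    have "llr y + \<gamma> \<le> llr x" if "x \<in> window A n t' \<eta>" "y \<in> window A n t \<eta>" for x y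
    proof -
      have "x \<in> words n" "y \<in> words n"
        using that window_subset_words by blast+
      then show ?thesis
        using mult_right_mono[OF sep[OF that(2,1)] True] llr_diff[of x y] True
        by (simp add: \<gamma>_def algebra_simps)
    qed
    then show ?thesis
      using gap_bound[OF window_subset_words window_subset_words assms(6,5)]
      by (simp add: \<gamma>_def d_def gap_rate_def mult_ac)
  next
    case False
    have "llr y + \<gamma> \<le> llr x" if "x \<in> window A n t \<eta>" "y \<in> window A n t' \<eta>" for x y
    proof -
      have "x \<in> words n" "y \<in> words n"
        using that window_subset_words by blast+
      then show ?thesis
        using mult_right_mono_neg[OF sep[OF that], of d] llr_diff[of x y] False
        by (simp add: \<gamma>_def algebra_simps)
    qed
    then show ?thesis
      using gap_bound[OF window_subset_words window_subset_words assms(5,6)]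
      by (simp add: \<gamma>_def d_def gap_rate_def mult_ac)
  qed
qed

lemma test_affinity_three_windows:
  assumes "0 \<le> \<delta>" "\<eta> \<le> \<delta> / 4" "\<And>xs. xs \<in> words n \<Longrightarrow> 0 \<le> u xs \<and> u xs \<le> 1" "0 < m"
    and "\<And>t. t \<in> {tilt - \<delta>, tilt, tilt + \<delta>} \<Longrightarrow> 2 * m \<le> (\<Sum>xs\<in>window A n t \<eta>. tilted xs)"
  shows "m * exp (gap_rate * (real n * \<delta> / 2))
    \<le> test_affinity \<alpha> (split_dist c A a) (split_dist c A b) n u"
proof -
  let ?P = "\<lambda>t. m \<le> (\<Sum>xs\<in>window A n t \<eta>. u xs * tilted xs)"
  let ?Q = "\<lambda>t. m \<le> (\<Sum>xs\<in>window A n t \<eta>. (1 - u xs) * tilted xs)"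
  have side: "?P t \<or> ?Q t" if "t \<in> {tilt - \<delta>, tilt, tilt + \<delta>}" for t
  proof -
    have "(\<Sum>xs\<in>window A n t \<eta>. u xs * tilted xs) + (\<Sum>xs\<in>window A n t \<eta>. (1 - u xs) * tilted xs)
        = (\<Sum>xs\<in>window A n t \<eta>. tilted xs)"
      by (simp add: algebra_simps flip: sum.distrib)
    then show ?thesis
      using assms(5)[OF that] by linarith
  qed
  obtain t t' where "t + \<delta> \<le> t'" "?P t \<and> ?P t' \<or> ?Q t \<and> ?Q t'"
    using two_of_three_on_same_side[of ?P "tilt - \<delta>" ?Q tilt "tilt + \<delta>" \<delta>] side assms(1) by auto
  then consider "t + \<delta> \<le> t'" "?P t" "?P t'" | "t + \<delta> \<le> t'" "?Q t" "?Q t'"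
    by blast
  then show ?thesis
  proof cases
    case 1
    then have "m * exp (gap_rate * (real n * \<delta> / 2))
        \<le> outcome_affinity \<alpha> (split_dist c A a) (split_dist c A b) n u"
      using assms(2-4) by (intro outcome_affinity_two_windows[of t \<delta> t' \<eta>]) auto
    then show ?thesis
      unfolding test_affinity_def by (simp add: add_increasing2 outcome_affinity_nonneg)
  next
    case 2
    then have "m * exp (gap_rate * (real n * \<delta> / 2))
        \<le> outcome_affinity \<alpha> (split_dist c A a) (split_dist c A b) n (\<lambda>xs. 1 - u xs)"
      using assms(2-4) by (intro outcome_affinity_two_windows[of t \<delta> t' \<eta>]) auto
    then show ?thesis
      unfolding test_affinity_def by (simp add: add_increasing outcome_affinity_nonneg)
  qed
qed

lemma window_tilted_mass_lower:
  assumes "0 < t" "t < 1" "0 < \<eta>" "0 < n" "1 / (2 * \<eta>\<^sup>2) \<le> real n"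
    and "binary_kl t tilt + \<eta> * \<bar>ln (t / tilt) - ln ((1 - t) / (1 - tilt))\<bar> \<le> \<Lambda>"
  shows "affinity ^ n * exp (- real n * \<Lambda>) / 2 \<le> (\<Sum>xs\<in>window A n t \<eta>. tilted xs)"
proof -
  have "exp (- real n * \<Lambda>) \<le> exp (- real n * (binary_kl t tilt
      + \<eta> * \<bar>ln (t / tilt) - ln ((1 - t) / (1 - tilt))\<bar>))"
    using mult_left_mono[OF assms(6), of "real n"] by simp
  also have "\<dots> \<le> 2 * (\<Sum>xs\<in>window A n t \<eta>. word_weight (split_dist c A tilt) xs)"
    using window_mass_lower[OF c_nonneg sum_c_in sum_c_out tilt_bounds assms(1-5)] by simp
  finally have "affinity ^ n * exp (- real n * \<Lambda>) / 2
      \<le> affinity ^ n * (\<Sum>xs\<in>window A n t \<eta>. word_weight (split_dist c A tilt) xs)"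
    using affinity_pos by simp
  also have "\<dots> = (\<Sum>xs\<in>window A n t \<eta>. tilted xs)"
    unfolding sum_distrib_left by (intro sum.cong) (auto simp: tilted_def window_def length_of_words)
  finally show ?thesis .
qed

lemma test_affinity_ge_of_window_parameters:
  assumes "0 < \<delta>" "0 < \<eta>" "\<eta> \<le> \<delta> / 4" "0 < tilt - \<delta>" "tilt + \<delta> < 1"
    and "\<And>t. t \<in> {tilt - \<delta>, tilt, tilt + \<delta>} \<Longrightarrow>
      binary_kl t tilt + \<eta> * \<bar>ln (t / tilt) - ln ((1 - t) / (1 - tilt))\<bar> \<le> gap_rate * \<delta> / 4"
    and "0 < n" "1 / (2 * \<eta>\<^sup>2) \<le> real n" "\<And>xs. xs \<in> words n \<Longrightarrow> 0 \<le> u xs \<and> u xs \<le> 1"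
  shows "affinity ^ n * exp (real n * (gap_rate * \<delta> / 4)) / 4
    \<le> test_affinity \<alpha> (split_dist c A a) (split_dist c A b) n u"
proof -
  define m where "m = affinity ^ n * exp (- real n * (gap_rate * \<delta> / 4)) / 4"
  have "2 * m \<le> (\<Sum>xs\<in>window A n t \<eta>. tilted xs)" if "t \<in> {tilt - \<delta>, tilt, tilt + \<delta>}" for t
    using window_tilted_mass_lower[OF _ _ assms(2,7,8) assms(6)[OF that]] that assms(1,4,5) tilt_bounds
    by (auto simp: m_def)
  then have "m * exp (gap_rate * (real n * \<delta> / 2)) \<le> test_affinity \<alpha> (split_dist c A a) (split_dist c A b) n u"
    using assms affinity_pos by (intro test_affinity_three_windows) (auto simp: m_def)
  moreover have "m * exp (gap_rate * (real n * \<delta> / 2)) = affinity ^ n * exp (real n * (gap_rate * \<delta> / 4)) / 4"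
  proof -
    have "- real n * (gap_rate * \<delta> / 4) + gap_rate * (real n * \<delta> / 2) = real n * (gap_rate * \<delta> / 4)"
      by (simp add: field_simps)
    then show ?thesis
      unfolding m_def by (simp add: mult_ac flip: exp_add)
  qed
  ultimately show ?thesis
    by simp
qed

lemma eventually_test_affinity_gap:
  obtains \<kappa> where "0 < \<kappa>"
    "\<forall>\<^sub>F n in sequentially. \<forall>u. (\<forall>xs\<in>words n. 0 \<le> u xs \<and> u xs \<le> 1) \<longrightarrow>
       affinity ^ n * exp (\<kappa> * real n) \<le> test_affinity \<alpha> (split_dist c A a) (split_dist c A b) n u"
proof -
  obtain \<delta> \<eta> where params: "0 < \<delta>" "0 < \<eta>" "\<eta> \<le> \<delta> / 4" "0 < tilt - \<delta>" "tilt + \<delta> < 1"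
    "\<And>t. t \<in> {tilt - \<delta>, tilt, tilt + \<delta>} \<Longrightarrow>
      binary_kl t tilt + \<eta> * \<bar>ln (t / tilt) - ln ((1 - t) / (1 - tilt))\<bar> \<le> gap_rate * \<delta> / 4"
    using window_parameters[OF tilt_bounds gap_rate_pos] by blast
  define \<kappa> where "\<kappa> = gap_rate * \<delta> / 8"
  have "0 < \<kappa>"
    using gap_rate_pos params(1) by (simp add: \<kappa>_def)
  have gap: "affinity ^ n * exp (\<kappa> * real n) \<le> test_affinity \<alpha> (split_dist c A a) (split_dist c A b) n u"
    if "0 < n" "1 / (2 * \<eta>\<^sup>2) \<le> real n" "ln 4 / \<kappa> \<le> real n"
      and "\<forall>xs\<in>words n. 0 \<le> u xs \<and> u xs \<le> 1" for n u
  proof -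
    have "ln 4 \<le> \<kappa> * real n"
      using that(3) \<open>0 < \<kappa>\<close> by (simp add: divide_le_eq mult.commute)
    then have "4 \<le> exp (\<kappa> * real n)"
      by (metis exp_ln exp_le_cancel_iff zero_less_numeral)
    then have "affinity ^ n * exp (\<kappa> * real n) \<le> affinity ^ n * (exp (\<kappa> * real n) * exp (\<kappa> * real n)) / 4"
      using affinity_pos by simp
    also have "\<dots> = affinity ^ n * exp (real n * (gap_rate * \<delta> / 4)) / 4"
      by (simp add: \<kappa>_def field_simps flip: exp_add)
    also have "\<dots> \<le> test_affinity \<alpha> (split_dist c A a) (split_dist c A b) n u"
      using that by (intro test_affinity_ge_of_window_parameters[OF params]) auto
    finally show ?thesis .
  qed
  have "\<forall>\<^sub>F n in sequentially. max (1 / (2 * \<eta>\<^sup>2)) (ln 4 / \<kappa>) \<le> real n"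
    using filterlim_real_sequentially unfolding filterlim_at_top by blast
  with eventually_gt_at_top[of 0]
  have "\<forall>\<^sub>F n in sequentially. \<forall>u. (\<forall>xs\<in>words n. 0 \<le> u xs \<and> u xs \<le> 1) \<longrightarrow>
      affinity ^ n * exp (\<kappa> * real n) \<le> test_affinity \<alpha> (split_dist c A a) (split_dist c A b) n u"
    by eventually_elim (use gap in auto)
  with \<open>0 < \<kappa>\<close> that show ?thesis
    by blast
qed

lemma D_test_n_le_n_renyi:
  "D_test_n \<alpha> (split_dist c A a) (split_dist c A b) n
     \<le> real n * renyi UNIV \<alpha> (split_dist c A a) (split_dist c A b)"
  using split_dist_nonneg[OF c_nonneg sum_c_in sum_c_out] a_bounds b_bounds affinity_pos \<alpha>_bounds
  by (intro D_test_n_le_renyi) (simp_all add: sum_geometric_mean)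

lemma eventually_D_test_n_le:
  obtains \<epsilon> where "0 < \<epsilon>" "\<forall>\<^sub>F n in sequentially.
    D_test_n \<alpha> (split_dist c A a) (split_dist c A b) n
      \<le> real n * (renyi UNIV \<alpha> (split_dist c A a) (split_dist c A b) - \<epsilon>)"
proof -
  obtain \<kappa> where "0 < \<kappa>" and gap: "\<forall>\<^sub>F n in sequentially. \<forall>u. (\<forall>xs\<in>words n. 0 \<le> u xs \<and> u xs \<le> 1) \<longrightarrow>
       affinity ^ n * exp (\<kappa> * real n) \<le> test_affinity \<alpha> (split_dist c A a) (split_dist c A b) n u"
    by (rule eventually_test_affinity_gap)
  have "D_test_n \<alpha> (split_dist c A a) (split_dist c A b) n
      \<le> real n * (renyi UNIV \<alpha> (split_dist c A a) (split_dist c A b) - \<kappa> / (1 - \<alpha>))"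
    if "\<forall>u. (\<forall>xs\<in>words n. 0 \<le> u xs \<and> u xs \<le> 1) \<longrightarrow>
       affinity ^ n * exp (\<kappa> * real n) \<le> test_affinity \<alpha> (split_dist c A a) (split_dist c A b) n u" for n
  proof -
    have "D_test_n \<alpha> (split_dist c A a) (split_dist c A b) n \<le> ln (affinity ^ n * exp (\<kappa> * real n)) / (\<alpha> - 1)"
      using that affinity_pos \<alpha>_bounds by (intro D_test_n_le) auto
    also have "\<dots> = real n * (renyi UNIV \<alpha> (split_dist c A a) (split_dist c A b) - \<kappa> / (1 - \<alpha>))"
      using affinity_pos \<alpha>_bounds
      by (simp add: renyi_eq ln_mult ln_realpow divide_simps) (simp add: algebra_simps)
    finally show ?thesis .
  qed
  with gap have "\<forall>\<^sub>F n in sequentially. D_test_n \<alpha> (split_dist c A a) (split_dist c A b) n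
      \<le> real n * (renyi UNIV \<alpha> (split_dist c A a) (split_dist c A b) - \<kappa> / (1 - \<alpha>))"
    by (rule eventually_mono)
  moreover have "0 < \<kappa> / (1 - \<alpha>)"
    using \<open>0 < \<kappa>\<close> \<alpha>_bounds by simp
  ultimately show ?thesis
    using that by blast
qed

lemma renyi_le_D_test_n_one:
  "renyi UNIV \<alpha> (split_dist c A a) (split_dist c A b) \<le> D_test_n \<alpha> (split_dist c A a) (split_dist c A b) 1"
proof -
  define T where "T xs ys = (if xs = ys then complex_of_real (indicator A (hd xs)) else 0)" for xs ys :: "'a list"
  have T: "is_test (words 1) T"
    unfolding T_def by (rule is_test_diag[OF finite_words]) simp
  have words_1: "(\<Sum>xs\<in>words 1. f xs) = (\<Sum>x\<in>UNIV. f [x])" for f :: "'a list \<Rightarrow> real"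
    using sum_words_Suc[of f 0] by (simp add: words_0)
  have mass: "(\<Sum>x\<in>UNIV. indicator A x * split_dist c A t x) = t"
    "(\<Sum>x\<in>UNIV. (1 - indicator A x) * split_dist c A t x) = 1 - t" for t
    using split_dist_mean[OF c_nonneg sum_c_in sum_c_out, of t] sum_split_dist[OF c_nonneg sum_c_in sum_c_out, of t]
    by (simp_all add: mult.commute left_diff_distrib sum_subtractf)
  have "test_affinity \<alpha> (split_dist c A a) (split_dist c A b) 1 (\<lambda>xs. Re (T xs xs)) = affinity"
    unfolding test_affinity_def outcome_affinity_def words_1
    by (simp add: T_def mass affinity_def affinity_in_def affinity_out_def)
  then have "renyi_pair \<alpha> (test_meas (words 1) T (tensor_pow (diag_op (split_dist c A a)) 1))
      (test_meas (words 1) T (tensor_pow (diag_op (split_dist c A b)) 1))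
      = renyi UNIV \<alpha> (split_dist c A a) (split_dist c A b)"
    by (simp add: renyi_pair_test_meas_tensor_pow_diag_op renyi_eq)
  moreover have "renyi_pair \<alpha> (test_meas (words 1) T (tensor_pow (diag_op (split_dist c A a)) 1))
      (test_meas (words 1) T (tensor_pow (diag_op (split_dist c A b)) 1))
      \<le> D_test_n \<alpha> (split_dist c A a) (split_dist c A b) 1"
    by (rule renyi_pair_le_D_test_n[where L = affinity])
      (use affinity_pos \<alpha>_bounds T test_affinity_ge_affinity_power[of 1] in auto)
  ultimately show ?thesis
    by simp
qed

end

lemma limsup_less_SUP_of_linear_bounds:
  fixes f :: "nat \<Rightarrow> real"
  assumes upper: "\<And>n. f n \<le> real n * D" and first: "D \<le> f 1"
    and eventually_upper: "\<forall>\<^sub>F n in sequentially. f n \<le> real n * D'" and "D' < D"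
  shows "limsup (\<lambda>n. ereal (f n / real n)) < (SUP n\<in>{1..}. ereal (f n / real n))
    \<and> (SUP n\<in>{1..}. ereal (f n / real n)) = ereal D"
proof -
  have "(SUP n\<in>{1..}. ereal (f n / real n)) = ereal D"
  proof (rule antisym)
    show "(SUP n\<in>{1..}. ereal (f n / real n)) \<le> ereal D"
      using upper by (intro SUP_least) (simp add: divide_le_eq mult.commute)
    show "ereal D \<le> (SUP n\<in>{1..}. ereal (f n / real n))"
      using first by (intro SUP_upper2[of 1]) auto
  qed
  moreover have "limsup (\<lambda>n. ereal (f n / real n)) \<le> ereal D'"
  proof (rule Limsup_bounded)
    show "\<forall>\<^sub>F n in sequentially. ereal (f n / real n) \<le> ereal D'"
      using eventually_upper eventually_gt_at_top[of 0]
      by eventually_elim (simp add: divide_le_eq mult.commute)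
  qed
  ultimately show ?thesis
    using \<open>D' < D\<close> by (simp add: le_less_trans)
qed

lemma block_proportional_representation:
  fixes \<rho> \<sigma> :: "'a::finite \<Rightarrow> real"
  assumes "prob_vec \<rho>" "prob_vec \<sigma>" "\<rho> \<noteq> \<sigma>"
    and prop_in: "\<And>w. w \<in> A \<Longrightarrow> sum \<sigma> A * \<rho> w = sum \<rho> A * \<sigma> w"
    and prop_out: "\<And>w. w \<in> - A \<Longrightarrow> sum \<sigma> (- A) * \<rho> w = sum \<rho> (- A) * \<sigma> w"
    and "sum \<rho> A \<noteq> 0" "sum \<sigma> A \<noteq> 0" "sum \<rho> (- A) \<noteq> 0" "sum \<sigma> (- A) \<noteq> 0"
    and "0 < \<alpha>" "\<alpha> < 1"
  obtains c a b where "block_proportional c A a b \<alpha>" "\<rho> = split_dist c A a" "\<sigma> = split_dist c A b"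
proof -
  define a b where "a = sum \<rho> A" and "b = sum \<sigma> A"
  have \<rho>: "\<forall>w. 0 \<le> \<rho> w" "sum \<rho> A + sum \<rho> (- A) = 1"
    and \<sigma>: "\<forall>w. 0 \<le> \<sigma> w" "sum \<sigma> A + sum \<sigma> (- A) = 1"
    using assms(1,2) by (simp_all add: prob_vec_def flip: sum_UNIV_split)
  then have "0 \<le> sum \<rho> A" "0 \<le> sum \<rho> (- A)" "0 \<le> sum \<sigma> A" "0 \<le> sum \<sigma> (- A)"
    by (simp_all add: sum_nonneg)
  then have a: "0 < a" "a < 1" and b: "0 < b" "b < 1"
    using assms(6-9) \<rho>(2) \<sigma>(2) by (auto simp: a_def b_def)
  have out: "sum \<rho> (- A) = 1 - a" "sum \<sigma> (- A) = 1 - b"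
    using \<rho>(2) \<sigma>(2) by (simp_all add: a_def b_def)
  define c where "c w = \<rho> w / (if w \<in> A then a else 1 - a)" for w
  have \<rho>_eq: "\<rho> = split_dist c A a"
    using a by (auto simp: fun_eq_iff split_dist_def c_def)
  have \<sigma>_eq: "\<sigma> = split_dist c A b"
  proof
    fix w
    show "\<sigma> w = split_dist c A b w"
      using prop_in[of w] prop_out[of w] a b
      by (cases "w \<in> A") (auto simp: split_dist_def c_def out field_simps simp flip: a_def b_def)
  qed
  have "sum c A = 1" "sum c (- A) = 1"
    using a \<rho>(2) by (simp_all add: c_def a_def flip: sum_divide_distrib)
  moreover have "a \<noteq> b"
    using assms(3) \<rho>_eq \<sigma>_eq by auto
  ultimately have "block_proportional c A a b \<alpha>"
    using a b \<rho>(1) assms(10,11) by unfold_locales (auto simp: c_def)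
  with \<rho>_eq \<sigma>_eq that show ?thesis
    by blast
qed

theorem mainTheorem3:
  fixes \<rho> \<sigma> :: "'a::finite \<Rightarrow> real" and \<Omega>0 :: "'a set" and \<alpha> :: real
  assumes "prob_vec \<rho>" and "prob_vec \<sigma>" and "\<rho> \<noteq> \<sigma>"
    and "\<And>w. w \<in> \<Omega>0 \<Longrightarrow> sum \<sigma> \<Omega>0 * \<rho> w = sum \<rho> \<Omega>0 * \<sigma> w"
    and "\<And>w. w \<in> - \<Omega>0 \<Longrightarrow> sum \<sigma> (- \<Omega>0) * \<rho> w = sum \<rho> (- \<Omega>0) * \<sigma> w"
    and "sum \<rho> \<Omega>0 \<noteq> 0" and "sum \<sigma> \<Omega>0 \<noteq> 0"
    and "sum \<rho> (- \<Omega>0) \<noteq> 0" and "sum \<sigma> (- \<Omega>0) \<noteq> 0"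
    and "0 < \<alpha>" and "\<alpha> < 1"
  shows "limsup (\<lambda>n. ereal (D_test_n \<alpha> \<rho> \<sigma> n / real n))
           < (SUP n\<in>{1..}. ereal (D_test_n \<alpha> \<rho> \<sigma> n / real n))
       \<and> (SUP n\<in>{1..}. ereal (D_test_n \<alpha> \<rho> \<sigma> n / real n)) = ereal (renyi UNIV \<alpha> \<rho> \<sigma>)"
proof -
  obtain c a b where "block_proportional c \<Omega>0 a b \<alpha>"
    and \<rho>: "\<rho> = split_dist c \<Omega>0 a" and \<sigma>: "\<sigma> = split_dist c \<Omega>0 b"
    using block_proportional_representation[OF assms] by blast
  then interpret block_proportional c \<Omega>0 a b \<alpha>
    by simp
  obtain \<epsilon> where "0 < \<epsilon>" and "\<forall>\<^sub>F n in sequentially.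
      D_test_n \<alpha> \<rho> \<sigma> n \<le> real n * (renyi UNIV \<alpha> \<rho> \<sigma> - \<epsilon>)"
    unfolding \<rho> \<sigma> by (rule eventually_D_test_n_le)
  then show ?thesis
    using D_test_n_le_n_renyi renyi_le_D_test_n_one unfolding \<rho> \<sigma>
    by (intro limsup_less_SUP_of_linear_bounds) auto
qed

end
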